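(* Let $X=X(\Delta)$ be a smooth projective toric variety of dimension $n$ with rays $\rho_1,\dots,\rho_{n+r}$, and suppose there is a maximal cone $\sigma_0$ with $\sigma_0(1)=\{\rho_1,\dots,\rho_n\}$ such that $$\rho_{n+j}+\sum_{i=1}^n\mathfrak{b}_{i,j}\rho_i=0\qquad(1\le j\le r)$$ with all $\mathfrak{b}_{i,j}\in\mathbb{Z}_{\ge0}$; call this positive relation $\mathcal{P}_{n+j}$. Let $D=\sum_{i=1}^{n+r}\mathfrak{a}_iD_{\rho_i}$ with $L=\mathcal{O}_X(D)$ globally generated, and let $\beta$ be the minimal $L$-degree of centred primitive relations. Then for all $1\le i_0\le n$, $1\le j_0\le r$, $$\deg_L(\mathcal{P}_{n+j_0})=\mathfrak{a}_{n+j_0}+\sum_{i=1}^n\mathfrak{a}_i\mathfrak{b}_{i,j_0}\ge\mathfrak{b}_{i_0,j_0}\beta.$$ If $L$ is ample and there exists $i_0\in\{1,\dots,n\}$ such that $\rho_{i_0}$ belongs to no centred primitive collection of $L$-degree $\beta$, then for this $i_0$ and all $1\le j_0\le r$ the inequality is strict: $\mathfrak{a}_{n+j_0}+\sum_{i=1}^n\mathfrak{a}_i\mathfrak{b}_{i,j_0}>\mathfrak{b}_{i_0,j_0}\beta$. Likewise, if $L$ is ample and there exists $j_0\in\{1,\dots,r\}$ such that $\rho_{n+j_0}$ belongs to no centred primitive collection of $L$-degree $\beta$, then for this $j_0$ and all $1\le i_0\le n$ the inequality is strict.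
   Context: Rays are identified with primitive generators; $D_\rho$ is the torus-invariant divisor of $\rho$. For $D=\sum a_\rho D_\rho$, $\phi_D$ is the piecewise linear function equal on each maximal cone $\sigma$ to $\langle m_D(\sigma),\cdot\rangle$ with $\langle m_D(\sigma),\rho\rangle=-a_\rho$ for $\rho\in\sigma(1)$; the $L$-degree of a relation $\sum c_\rho\rho=0$ is $-\sum c_\rho\phi_D(\rho)$. A primitive collection is a set of rays not generating a cone of $\Delta$ while every proper subset does; it is centred if its elements sum to $0$, and $\sum_{\rho\in\mathcal{I}}\rho=0$ is then a centred primitive relation, whose $L$-degree is the $L$-degree of the collection. *)

theory Defs
  imports "HOL-Analysis.Analysis"
begin

text \<open>Lattice N = Z^n embedded in N_R = real^'n, n = CARD('n).
  Rays are indexed by 0..<Nr (paper's rho_{k+1} is ray k); v k is its primitive generator.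
  A smooth complete simplicial fan is given by its set M of maximal cones, each a set of ray indices.\<close>

definition lattice_pt :: "real^'n \<Rightarrow> bool" where
  "lattice_pt x \<longleftrightarrow> (\<forall>k. x $ k \<in> \<int>)"

definition cone_of :: "(nat \<Rightarrow> real^'n) \<Rightarrow> nat set \<Rightarrow> (real^'n) set" where
  "cone_of v S = {x. \<exists>c. (\<forall>i\<in>S. c i \<ge> 0) \<and> x = (\<Sum>i\<in>S. c i *\<^sub>R v i)}"

definition mD :: "(nat \<Rightarrow> real^'n) \<Rightarrow> nat set \<Rightarrow> (nat \<Rightarrow> int) \<Rightarrow> real^'n" where
  "mD v \<sigma> a = (THE m. \<forall>i\<in>\<sigma>. inner m (v i) = - of_int (a i))"

definition phiD :: "(nat \<Rightarrow> real^'n) \<Rightarrow> nat set set \<Rightarrow> (nat \<Rightarrow> int) \<Rightarrow> real^'n \<Rightarrow> real" where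
  "phiD v M a u = inner (mD v (SOME \<sigma>. \<sigma> \<in> M \<and> u \<in> cone_of v \<sigma>) a) u"

text \<open>O(D) globally generated / ample, via the standard criterion on the m_D(sigma)
  (Cox--Little--Schenck Thm 6.1.7, Lemma 6.1.13): D = sum a_k D_k.\<close>
definition globally_generated :: "nat \<Rightarrow> (nat \<Rightarrow> real^'n) \<Rightarrow> nat set set \<Rightarrow> (nat \<Rightarrow> int) \<Rightarrow> bool" where
  "globally_generated Nr v M a \<longleftrightarrow>
     (\<forall>\<sigma>\<in>M. \<forall>k<Nr. inner (mD v \<sigma> a) (v k) \<ge> - of_int (a k))"

definition ample :: "nat \<Rightarrow> (nat \<Rightarrow> real^'n) \<Rightarrow> nat set set \<Rightarrow> (nat \<Rightarrow> int) \<Rightarrow> bool" where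
  "ample Nr v M a \<longleftrightarrow>
     (\<forall>\<sigma>\<in>M. \<forall>k<Nr. k \<notin> \<sigma> \<longrightarrow> inner (mD v \<sigma> a) (v k) > - of_int (a k))"

definition smooth_projective_fan :: "nat \<Rightarrow> (nat \<Rightarrow> real^'n) \<Rightarrow> nat set set \<Rightarrow> bool" where
  "smooth_projective_fan Nr v M \<longleftrightarrow>
     inj_on v {..<Nr} \<and> (\<forall>k<Nr. lattice_pt (v k)) \<and>
     M \<noteq> {} \<and> \<Union>M = {..<Nr} \<and>
     (\<forall>\<sigma>\<in>M. \<sigma> \<subseteq> {..<Nr} \<and> card \<sigma> = CARD('n) \<and>
        (\<forall>x. lattice_pt x \<longrightarrow> (\<exists>c::nat \<Rightarrow> int. x = (\<Sum>i\<in>\<sigma>. of_int (c i) *\<^sub>R v i)))) \<and>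
     (\<forall>\<sigma>\<in>M. \<forall>\<tau>\<in>M. cone_of v \<sigma> \<inter> cone_of v \<tau> = cone_of v (\<sigma> \<inter> \<tau>)) \<and>
     (\<Union>\<sigma>\<in>M. cone_of v \<sigma>) = UNIV \<and>
     (\<exists>a'. ample Nr v M a')"

definition generates_cone :: "(nat \<Rightarrow> real^'n) \<Rightarrow> nat set set \<Rightarrow> nat set \<Rightarrow> bool" where
  "generates_cone v M S \<longleftrightarrow> (\<exists>\<sigma>\<in>M. \<exists>\<tau>. \<tau> \<subseteq> \<sigma> \<and> cone_of v S = cone_of v \<tau>)"

definition primitive_collection :: "nat \<Rightarrow> (nat \<Rightarrow> real^'n) \<Rightarrow> nat set set \<Rightarrow> nat set \<Rightarrow> bool" where
  "primitive_collection Nr v M I \<longleftrightarrow>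
     I \<subseteq> {..<Nr} \<and> \<not> generates_cone v M I \<and> (\<forall>J. J \<subset> I \<longrightarrow> generates_cone v M J)"

definition centred_primitive_collection :: "nat \<Rightarrow> (nat \<Rightarrow> real^'n) \<Rightarrow> nat set set \<Rightarrow> nat set \<Rightarrow> bool" where
  "centred_primitive_collection Nr v M I \<longleftrightarrow>
     primitive_collection Nr v M I \<and> (\<Sum>i\<in>I. v i) = 0"

definition Ldeg :: "nat \<Rightarrow> (nat \<Rightarrow> real^'n) \<Rightarrow> nat set set \<Rightarrow> (nat \<Rightarrow> int) \<Rightarrow> (nat \<Rightarrow> int) \<Rightarrow> real" where
  "Ldeg Nr v M a c = - (\<Sum>k<Nr. of_int (c k) * phiD v M a (v k))"

definition coll_rel :: "nat set \<Rightarrow> nat \<Rightarrow> int" where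
  "coll_rel I = (\<lambda>k. if k \<in> I then 1 else 0)"

text \<open>Coefficients of P_{n+j}: rho_{n+j} + sum_i b_{i,j} rho_i = 0 (0-based indices).\<close>
definition pos_rel :: "nat \<Rightarrow> (nat \<Rightarrow> nat \<Rightarrow> nat) \<Rightarrow> nat \<Rightarrow> nat \<Rightarrow> int" where
  "pos_rel n b j = (\<lambda>k. if k = n + j then 1 else if k < n then int (b k j) else 0)"

end

theory Submission
  imports Defs
begin

(* Since phiD(\<rho>_k) = -a_k, the L-degree of a relation \<Sum> c_k \<rho>_k = 0 is \<Sum> c_k a_k. For a relation
   that is nonnegative off a maximal cone \<sigma> it equals \<Sum> c_k (a_k + <m_D(\<sigma>), \<rho>_k>), a sum of
   nonnegative terms when L is globally generated, with a positive term when L is ample and c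
   does not vanish off \<sigma>.
   Hence every effective nonzero relation has degree at least \<beta>: pick a primitive collection P
   in its support; if P is centred, subtract its relation; otherwise write the lattice point
   \<Sum>_P \<rho> in its maximal cone and subtract the resulting relation, whose degree for an auxiliary
   ample class is positive, so that the process terminates.
   Writing -\<rho>_i0 in a maximal cone \<tau> gives an effective relation R with R_i0 \<ge> 1, and
   P_{n+j0} - b R is nonnegative off \<tau>, so deg P_{n+j0} \<ge> b deg R \<ge> b \<beta>. For ample L, equality
   with b > 0 forces R to be the relation of a centred primitive collection of degree \<beta>; it
   contains \<rho>_i0, and it must contain \<rho>_{n+j0}, since otherwise P_{n+j0} - b R would be nonzero
   there and hence of positive degree. *)

lemma lattice_pt_sum:
  "(\<And>k. k \<in> S \<Longrightarrow> lattice_pt (x k)) \<Longrightarrow> lattice_pt (\<Sum>k\<in>S. x k :: real^'n)"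
  unfolding lattice_pt_def by (auto intro!: Ints_sum simp: sum_component)

lemma lattice_pt_uminus: "lattice_pt x \<Longrightarrow> lattice_pt (- x)"
  unfolding lattice_pt_def by simp

lemma exists_minimal_failing_subset:
  assumes "finite K" "\<not> Q K"
  shows "\<exists>P\<subseteq>K. \<not> Q P \<and> (\<forall>J. J \<subset> P \<longrightarrow> Q J)"
  using assms
proof (induction K rule: finite_psubset_induct)
  case (psubset K)
  show ?case
  proof (cases "\<forall>J. J \<subset> K \<longrightarrow> Q J")
    case False
    then obtain J where "J \<subset> K" "\<not> Q J" by blast
    with psubset.IH show ?thesis by (meson order.trans psubset_imp_subset)
  qed (use psubset.prems in blast)
qed

locale smooth_fan =
  fixes Nr :: nat and v :: "nat \<Rightarrow> real^'n" and M :: "nat set set"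
  assumes smooth_projective: "smooth_projective_fan Nr v M"
begin

section \<open>Maximal cones\<close>

lemma
  shows inj_on_rays: "inj_on v {..<Nr}"
    and lattice_pt_rays: "\<forall>k<Nr. lattice_pt (v k)"
    and max_cones_nonempty: "M \<noteq> {}"
    and Union_max_cones: "\<Union>M = {..<Nr}"
    and max_cones_lattice_bases: "\<forall>\<sigma>\<in>M. \<sigma> \<subseteq> {..<Nr} \<and> card \<sigma> = CARD('n) \<and>
        (\<forall>x. lattice_pt x \<longrightarrow> (\<exists>c::nat \<Rightarrow> int. x = (\<Sum>i\<in>\<sigma>. of_int (c i) *\<^sub>R v i)))"
    and cone_of_inter: "\<forall>\<sigma>\<in>M. \<forall>\<tau>\<in>M. cone_of v \<sigma> \<inter> cone_of v \<tau> = cone_of v (\<sigma> \<inter> \<tau>)"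
    and max_cones_cover: "(\<Union>\<sigma>\<in>M. cone_of v \<sigma>) = UNIV"
    and ample_exists: "\<exists>a. ample Nr v M a"
  by (insert smooth_projective[unfolded smooth_projective_fan_def], elim conjE, assumption)+

lemma max_cone_subset: "\<sigma> \<in> M \<Longrightarrow> \<sigma> \<subseteq> {..<Nr}"
  using max_cones_lattice_bases by blast

lemma finite_max_cone: "\<sigma> \<in> M \<Longrightarrow> finite \<sigma>"
  using max_cone_subset finite_subset by blast

lemma card_max_cone: "\<sigma> \<in> M \<Longrightarrow> card \<sigma> = CARD('n)"
  using max_cones_lattice_bases by blast

lemma inj_on_max_cone: "\<sigma> \<in> M \<Longrightarrow> inj_on v \<sigma>"
  using inj_on_rays max_cone_subset inj_on_subset by blast

lemma span_max_cone:
  assumes "\<sigma> \<in> M"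
  shows "span (v ` \<sigma>) = UNIV"
proof -
  have "axis j 1 \<in> span (v ` \<sigma>)" for j
  proof -
    have "lattice_pt (axis j (1::real))"
      unfolding lattice_pt_def axis_def by auto
    then obtain c :: "nat \<Rightarrow> int" where "axis j 1 = (\<Sum>i\<in>\<sigma>. of_int (c i) *\<^sub>R v i)"
      using max_cones_lattice_bases assms by blast
    also have "\<dots> \<in> span (v ` \<sigma>)"
      by (intro span_sum span_scale span_base) auto
    finally show ?thesis .
  qed
  then have "x \<in> span (v ` \<sigma>)" for x
    by (subst basis_expansion[of x, symmetric]) (simp add: scalar_mult_eq_scaleR span_sum span_scale)
  then show ?thesis by auto
qed

lemma independent_max_cone: "\<sigma> \<in> M \<Longrightarrow> independent (v ` \<sigma>)"
  by (rule card_le_dim_spanning[of _ UNIV])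
    (simp_all add: span_max_cone finite_max_cone card_image inj_on_max_cone card_max_cone)

lemma max_cone_coeff_eq_0:
  assumes \<sigma>: "\<sigma> \<in> M" and zero: "(\<Sum>i\<in>\<sigma>. c i *\<^sub>R v i) = 0" and k: "k \<in> \<sigma>"
  shows "c k = 0"
proof -
  define u where "u x = c (the_inv_into \<sigma> v x)" for x
  have inj: "inj_on v \<sigma>" using inj_on_max_cone[OF \<sigma>] .
  have "(\<Sum>x\<in>v ` \<sigma>. u x *\<^sub>R x) = (\<Sum>i\<in>\<sigma>. c i *\<^sub>R v i)"
    by (simp add: sum.reindex[OF inj] u_def the_inv_into_f_f[OF inj])
  then have "u (v k) = 0"
    using independent_max_cone[OF \<sigma>] finite_max_cone[OF \<sigma>] k zero
    by (intro independentD[of "v ` \<sigma>"]) auto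
  then show ?thesis by (simp add: u_def the_inv_into_f_f[OF inj k])
qed

lemma mD_ray:
  assumes \<sigma>: "\<sigma> \<in> M" and i: "i \<in> \<sigma>"
  shows "inner (mD v \<sigma> a) (v i) = - of_int (a i)"
proof -
  have inj: "inj_on v \<sigma>" using inj_on_max_cone[OF \<sigma>] .
  obtain g :: "real^'n \<Rightarrow> real"
    where g: "linear g" "\<forall>x\<in>v ` \<sigma>. g x = - of_int (a (the_inv_into \<sigma> v x))"
    using linear_independent_extend[OF independent_max_cone[OF \<sigma>],
        of "\<lambda>x. - of_int (a (the_inv_into \<sigma> v x))"] by blast
  define m where "m = adjoint g 1"
  have m: "\<forall>i\<in>\<sigma>. inner m (v i) = - of_int (a i)"
    using g by (simp add: m_def inner_commute adjoint_works the_inv_into_f_f[OF inj])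
  have "m' = m" if m': "\<forall>i\<in>\<sigma>. inner m' (v i) = - of_int (a i)" for m'
  proof -
    have "orthogonal (m' - m) x" for x
      using span_max_cone[OF \<sigma>] m m'
      by (intro orthogonal_to_span[of x "v ` \<sigma>"]) (auto simp: orthogonal_def inner_diff_left)
    then show ?thesis using orthogonal_self[of "m' - m"] by simp
  qed
  then have "mD v \<sigma> a = m"
    unfolding mD_def using m by (intro the_equality) blast+
  then show ?thesis using m i by simp
qed

lemma mem_cone_of: "finite S \<Longrightarrow> k \<in> S \<Longrightarrow> v k \<in> cone_of v S"
  unfolding cone_of_def
  by (intro CollectI exI[of _ "\<lambda>i. if i = k then 1 else 0"])
    (simp add: if_distrib[of "\<lambda>t. t *\<^sub>R _"] cong: if_cong)

lemma cone_of_mono: "finite \<sigma> \<Longrightarrow> \<tau> \<subseteq> \<sigma> \<Longrightarrow> cone_of v \<tau> \<subseteq> cone_of v \<sigma>"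
proof
  fix x assume fin: "finite \<sigma>" and sub: "\<tau> \<subseteq> \<sigma>" and "x \<in> cone_of v \<tau>"
  then obtain c where c: "\<forall>i\<in>\<tau>. 0 \<le> c i" "x = (\<Sum>i\<in>\<tau>. c i *\<^sub>R v i)"
    unfolding cone_of_def by blast
  have "x = (\<Sum>i\<in>\<sigma>. (if i \<in> \<tau> then c i else 0) *\<^sub>R v i)"
    using c(2) fin sub
    by (simp add: if_distrib[of "\<lambda>t. t *\<^sub>R _"] sum.inter_restrict[symmetric] Int_absorb1 cong: if_cong)
  with c(1) show "x \<in> cone_of v \<sigma>"
    unfolding cone_of_def by (intro CollectI exI[of _ "\<lambda>i. if i \<in> \<tau> then c i else 0"]) auto
qed

lemma ray_mem_max_cone:
  assumes \<sigma>: "\<sigma> \<in> M" and k: "k < Nr" and vk: "v k \<in> cone_of v \<sigma>"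
  shows "k \<in> \<sigma>"
proof (rule ccontr)
  assume k\<sigma>: "k \<notin> \<sigma>"
  obtain \<tau> where \<tau>: "\<tau> \<in> M" "k \<in> \<tau>"
    using Union_max_cones k by blast
  have "v k \<in> cone_of v (\<sigma> \<inter> \<tau>)"
    using vk mem_cone_of[OF finite_max_cone[OF \<tau>(1)] \<tau>(2)] cone_of_inter \<sigma> \<tau>(1) by blast
  then obtain c where c: "v k = (\<Sum>i\<in>\<tau> \<inter> \<sigma>. c i *\<^sub>R v i)"
    unfolding cone_of_def by (auto simp: Int_commute)
  define e where "e i = (if i = k then 1 else 0) - (if i \<in> \<sigma> then c i else 0)" for i
  have "(\<Sum>i\<in>\<tau>. e i *\<^sub>R v i) = v k - (\<Sum>i\<in>\<tau> \<inter> \<sigma>. c i *\<^sub>R v i)"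
    using finite_max_cone[OF \<tau>(1)] \<tau>(2)
    by (simp add: e_def scaleR_diff_left sum_subtractf if_distrib[of "\<lambda>t. t *\<^sub>R _"]
        sum.inter_restrict cong: if_cong)
  then have "e k = 0"
    using max_cone_coeff_eq_0[OF \<tau>(1) _ \<tau>(2)] c by simp
  with k\<sigma> show False by (simp add: e_def)
qed

lemma phiD_ray:
  assumes k: "k < Nr"
  shows "phiD v M a (v k) = - of_int (a k)"
proof -
  define \<sigma> where "\<sigma> = (SOME \<sigma>. \<sigma> \<in> M \<and> v k \<in> cone_of v \<sigma>)"
  have "\<exists>\<sigma>. \<sigma> \<in> M \<and> v k \<in> cone_of v \<sigma>"
    using max_cones_cover by blast
  then have \<sigma>: "\<sigma> \<in> M" "v k \<in> cone_of v \<sigma>"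
    unfolding \<sigma>_def by (metis (mono_tags, lifting) someI_ex)+
  then show ?thesis
    unfolding phiD_def \<sigma>_def[symmetric] using mD_ray ray_mem_max_cone k by blast
qed

section \<open>Degrees of relations\<close>

definition deg :: "(nat \<Rightarrow> int) \<Rightarrow> (nat \<Rightarrow> int) \<Rightarrow> int" where
  "deg a c = (\<Sum>k<Nr. c k * a k)"

definition relation :: "(nat \<Rightarrow> int) \<Rightarrow> bool" where
  "relation c \<longleftrightarrow> (\<Sum>k<Nr. of_int (c k) *\<^sub>R v k) = 0"

definition effective :: "(nat \<Rightarrow> int) \<Rightarrow> bool" where
  "effective c \<longleftrightarrow> (\<forall>k<Nr. 0 \<le> c k)"

lemma Ldeg_eq_deg: "Ldeg Nr v M a c = of_int (deg a c)"
  unfolding Ldeg_def deg_def by (simp add: phiD_ray sum_negf[symmetric])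

lemma deg_diff: "deg a (\<lambda>k. c k - e k) = deg a c - deg a e"
  unfolding deg_def by (simp add: sum_subtractf left_diff_distrib)

lemma deg_scale: "deg a (\<lambda>k. t * c k) = t * deg a c"
  unfolding deg_def by (simp add: sum_distrib_left mult.assoc)

lemma deg_cong: "(\<And>k. k < Nr \<Longrightarrow> c k = e k) \<Longrightarrow> deg a c = deg a e"
  unfolding deg_def by (rule sum.cong) auto

lemma relation_diff: "relation c \<Longrightarrow> relation e \<Longrightarrow> relation (\<lambda>k. c k - e k)"
  unfolding relation_def by (simp add: scaleR_diff_left sum_subtractf)

lemma relation_scale:
  assumes "relation c"
  shows "relation (\<lambda>k. t * c k)"
proof -
  have "(\<Sum>k<Nr. of_int (t * c k) *\<^sub>R v k) = of_int t *\<^sub>R (\<Sum>k<Nr. of_int (c k) *\<^sub>R v k)"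
    by (simp add: scaleR_sum_right)
  with assms show ?thesis unfolding relation_def by simp
qed

lemma sum_coll_rel:
  assumes "P \<subseteq> {..<Nr}"
  shows "(\<Sum>k<Nr. of_int (coll_rel P k) *\<^sub>R v k) = (\<Sum>i\<in>P. v i)"
proof -
  have "(\<Sum>k<Nr. of_int (coll_rel P k) *\<^sub>R v k) = (\<Sum>k\<in>P. of_int (coll_rel P k) *\<^sub>R v k)"
    by (rule sum.mono_neutral_right) (use assms in \<open>auto simp: coll_rel_def\<close>)
  also have "\<dots> = (\<Sum>i\<in>P. v i)"
    by (rule sum.cong) (auto simp: coll_rel_def)
  finally show ?thesis .
qed

lemma relation_centred_coll_rel:
  "centred_primitive_collection Nr v M P \<Longrightarrow> relation (coll_rel P)"
  unfolding centred_primitive_collection_def primitive_collection_def relation_def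
  by (simp add: sum_coll_rel)

lemma sum_pos_rel:
  fixes f :: "int \<Rightarrow> nat \<Rightarrow> 'b::comm_monoid_add"
  assumes j: "n + j < Nr" and f0: "\<And>k. f 0 k = 0"
  shows "(\<Sum>k<Nr. f (pos_rel n b j k) k) = f 1 (n + j) + (\<Sum>k<n. f (int (b k j)) k)"
proof -
  have "(\<Sum>k<Nr. f (pos_rel n b j k) k) = (\<Sum>k\<in>insert (n + j) {..<n}. f (pos_rel n b j k) k)"
    by (rule sum.mono_neutral_right) (use j f0 in \<open>auto simp: pos_rel_def\<close>)
  also have "\<dots> = f 1 (n + j) + (\<Sum>k<n. f (int (b k j)) k)"
    by (simp add: pos_rel_def)
  finally show ?thesis .
qed

lemma effective_pos_rel: "effective (pos_rel n b j)"
  unfolding effective_def pos_rel_def by simp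

lemma relation_pos_rel:
  assumes "n + j < Nr" and "v (n + j) + (\<Sum>i<n. real (b i j) *\<^sub>R v i) = 0"
  shows "relation (pos_rel n b j)"
  unfolding relation_def using assms sum_pos_rel[of n j "\<lambda>x k. of_int x *\<^sub>R v k"] by simp

lemma deg_pos_rel:
  assumes "n + j < Nr"
  shows "deg a (pos_rel n b j) = a (n + j) + (\<Sum>i<n. a i * int (b i j))"
  unfolding deg_def using assms sum_pos_rel[of n j "\<lambda>x k. x * a k"] by (simp add: mult.commute)

text \<open>A relation kills every linear function, so \<open>a\<^sub>k\<close> may be replaced by
  \<open>a\<^sub>k + \<langle>m, \<rho>\<^sub>k\<rangle>\<close>; for \<open>m = m\<^sub>D(\<sigma>)\<close> these terms vanish on \<open>\<sigma>\<close> and are nonnegative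
  (positive) off \<open>\<sigma>\<close> when L is globally generated (ample).\<close>

lemma deg_relation_twist:
  assumes "relation c"
  shows "of_int (deg a c) = (\<Sum>k<Nr. of_int (c k) * (of_int (a k) + inner m (v k)))"
proof -
  have "(\<Sum>k<Nr. of_int (c k) * inner m (v k)) = inner m (\<Sum>k<Nr. of_int (c k) *\<^sub>R v k)"
    by (simp add: inner_sum_right)
  also have "\<dots> = 0" using assms unfolding relation_def by simp
  finally show ?thesis
    unfolding deg_def by (simp add: distrib_left sum.distrib)
qed

lemma relation_supported_in_max_cone:
  assumes \<sigma>: "\<sigma> \<in> M" and c: "relation c" and supp: "\<forall>k<Nr. k \<notin> \<sigma> \<longrightarrow> c k = 0"
  shows "\<forall>k<Nr. c k = 0"
proof -
  have "(\<Sum>k\<in>\<sigma>. of_int (c k) *\<^sub>R v k) = (\<Sum>k<Nr. of_int (c k) *\<^sub>R v k)"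
    by (rule sum.mono_neutral_left) (use max_cone_subset[OF \<sigma>] supp in auto)
  with c have "(\<Sum>k\<in>\<sigma>. of_int (c k) *\<^sub>R v k) = 0" unfolding relation_def by simp
  then have "k \<in> \<sigma> \<Longrightarrow> (of_int (c k) :: real) = 0" for k
    using max_cone_coeff_eq_0[OF \<sigma>, of "\<lambda>k. of_int (c k)"] by blast
  with supp show ?thesis by auto
qed

lemma ample_imp_globally_generated:
  "ample Nr v M a \<Longrightarrow> globally_generated Nr v M a"
  unfolding ample_def globally_generated_def
  by (metis mD_ray order.strict_implies_order order_refl)

lemma twisted_term_nonneg:
  assumes gg: "globally_generated Nr v M a" and \<sigma>: "\<sigma> \<in> M" and k: "k < Nr"
    and nonneg: "\<forall>k<Nr. k \<notin> \<sigma> \<longrightarrow> 0 \<le> c k"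
  shows "0 \<le> of_int (c k) * (of_int (a k) + inner (mD v \<sigma> a) (v k))"
proof (cases "k \<in> \<sigma>")
  case False
  with nonneg k have "0 \<le> c k" by simp
  moreover have "- of_int (a k) \<le> inner (mD v \<sigma> a) (v k)"
    using gg \<sigma> k unfolding globally_generated_def by simp
  ultimately show ?thesis by simp
qed (simp add: mD_ray[OF \<sigma>])

lemma deg_nonneg_off_max_cone:
  assumes gg: "globally_generated Nr v M a" and \<sigma>: "\<sigma> \<in> M" and c: "relation c"
    and nonneg: "\<forall>k<Nr. k \<notin> \<sigma> \<longrightarrow> 0 \<le> c k"
  shows "0 \<le> deg a c"
proof -
  have "0 \<le> (\<Sum>k<Nr. of_int (c k) * (of_int (a k) + inner (mD v \<sigma> a) (v k)) :: real)"
    using twisted_term_nonneg[OF gg \<sigma> _ nonneg] by (auto intro!: sum_nonneg)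
  then show ?thesis using deg_relation_twist[OF c, of a "mD v \<sigma> a"] by simp
qed

lemma deg_pos_off_max_cone:
  assumes am: "ample Nr v M a" and \<sigma>: "\<sigma> \<in> M" and c: "relation c"
    and nonneg: "\<forall>k<Nr. k \<notin> \<sigma> \<longrightarrow> 0 \<le> c k" and nonzero: "\<exists>k<Nr. c k \<noteq> 0"
  shows "0 < deg a c"
proof -
  define t where "t k = (of_int (c k) * (of_int (a k) + inner (mD v \<sigma> a) (v k)) :: real)" for k
  obtain k where k: "k < Nr" "k \<notin> \<sigma>" "c k \<noteq> 0"
    using relation_supported_in_max_cone[OF \<sigma> c] nonzero by blast
  have "0 < sum t {..<Nr}"
  proof (rule sum_pos2)
    have "0 < c k" using nonneg k by force
    moreover have "- of_int (a k) < inner (mD v \<sigma> a) (v k)"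
      using am \<sigma> k unfolding ample_def by simp
    ultimately show "0 < t k" unfolding t_def by simp
    show "0 \<le> t i" if "i \<in> {..<Nr}" for i
      using twisted_term_nonneg[OF ample_imp_globally_generated[OF am] \<sigma> _ nonneg] that
      unfolding t_def by simp
  qed (use k in auto)
  then show ?thesis using deg_relation_twist[OF c, of a "mD v \<sigma> a"] by (simp add: t_def)
qed

lemma effective_deg_nonneg:
  "globally_generated Nr v M a \<Longrightarrow> effective c \<Longrightarrow> relation c \<Longrightarrow> 0 \<le> deg a c"
  using max_cones_nonempty deg_nonneg_off_max_cone unfolding effective_def by blast

lemma effective_deg_pos:
  "ample Nr v M a \<Longrightarrow> effective c \<Longrightarrow> relation c \<Longrightarrow> \<exists>k<Nr. c k \<noteq> 0 \<Longrightarrow> 0 < deg a c"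
  using max_cones_nonempty deg_pos_off_max_cone unfolding effective_def by blast

section \<open>Primitive collections in the support of a relation\<close>

definition is_face :: "nat set \<Rightarrow> bool" where
  "is_face S \<longleftrightarrow> (\<exists>\<sigma>\<in>M. S \<subseteq> \<sigma>)"

lemma generates_cone_iff_face:
  assumes S: "S \<subseteq> {..<Nr}"
  shows "generates_cone v M S \<longleftrightarrow> is_face S"
proof
  assume "generates_cone v M S"
  then obtain \<sigma> \<tau> where \<sigma>: "\<sigma> \<in> M" and "\<tau> \<subseteq> \<sigma>" and "cone_of v S = cone_of v \<tau>"
    unfolding generates_cone_def by blast
  then have sub: "cone_of v S \<subseteq> cone_of v \<sigma>"
    using cone_of_mono finite_max_cone by simp
  have "k \<in> \<sigma>" if k: "k \<in> S" for k
  proof (rule ray_mem_max_cone[OF \<sigma>])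
    show "k < Nr" using S k by auto
    show "v k \<in> cone_of v \<sigma>"
      using sub mem_cone_of[OF finite_subset[OF S finite_lessThan] k] by blast
  qed
  with \<sigma> show "is_face S" unfolding is_face_def by blast
next
  assume "is_face S"
  then show "generates_cone v M S" unfolding is_face_def generates_cone_def by blast
qed

lemma primitive_collection_in_support:
  assumes c: "relation c" and nonzero: "\<exists>k<Nr. c k \<noteq> 0"
  obtains P where "primitive_collection Nr v M P" "\<forall>k\<in>P. c k \<noteq> 0"
proof -
  define K where "K = {k. k < Nr \<and> c k \<noteq> 0}"
  have "\<not> is_face K"
    using relation_supported_in_max_cone[OF _ c] nonzero unfolding is_face_def K_def by blast
  then obtain P where P: "P \<subseteq> K" "\<not> is_face P" "\<forall>J. J \<subset> P \<longrightarrow> is_face J"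
    using exists_minimal_failing_subset[of K is_face] unfolding K_def by auto
  have PN: "P \<subseteq> {..<Nr}" using P(1) unfolding K_def by auto
  have "generates_cone v M J" if "J \<subset> P" for J
  proof -
    have "J \<subseteq> {..<Nr}" using that PN by blast
    with P(3) that show ?thesis by (simp add: generates_cone_iff_face)
  qed
  with PN P(2) have "primitive_collection Nr v M P"
    unfolding primitive_collection_def by (simp add: generates_cone_iff_face)
  with P(1) show thesis using that unfolding K_def by blast
qed

lemma lattice_pt_decomposition:
  assumes "lattice_pt y"
  obtains \<sigma> d where "\<sigma> \<in> M" "\<forall>k. 0 \<le> d k" "\<forall>k. k \<notin> \<sigma> \<longrightarrow> d k = 0"
    "y = (\<Sum>k<Nr. of_int (d k) *\<^sub>R v k)"
proof -
  obtain \<sigma> where \<sigma>: "\<sigma> \<in> M" "y \<in> cone_of v \<sigma>"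
    using max_cones_cover by blast
  then obtain t where t: "\<forall>i\<in>\<sigma>. 0 \<le> t i" "y = (\<Sum>i\<in>\<sigma>. t i *\<^sub>R v i)"
    unfolding cone_of_def by blast
  obtain z :: "nat \<Rightarrow> int" where z: "y = (\<Sum>i\<in>\<sigma>. of_int (z i) *\<^sub>R v i)"
    using max_cones_lattice_bases \<sigma>(1) assms by blast
  have "(\<Sum>i\<in>\<sigma>. (t i - of_int (z i)) *\<^sub>R v i) = 0"
    using t(2) z by (simp add: scaleR_diff_left sum_subtractf)
  then have tz: "i \<in> \<sigma> \<Longrightarrow> t i = of_int (z i)" for i
    using max_cone_coeff_eq_0[OF \<sigma>(1)] by fastforce
  define d where "d i = (if i \<in> \<sigma> then z i else 0)" for i
  have "(\<Sum>k<Nr. of_int (d k) *\<^sub>R v k) = (\<Sum>k\<in>\<sigma>. of_int (d k) *\<^sub>R v k)"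
    by (rule sum.mono_neutral_right) (use max_cone_subset[OF \<sigma>(1)] in \<open>auto simp: d_def\<close>)
  also have "\<dots> = y" using z by (simp add: d_def)
  moreover have "0 \<le> d k" for k
    using tz t(1) by (cases "k \<in> \<sigma>") (force simp: d_def)+
  ultimately show thesis
    using that[OF \<sigma>(1), of d] by (simp add: d_def)
qed

lemma noncentred_primitive_collection_relation:
  assumes P: "primitive_collection Nr v M P" and noncentred: "(\<Sum>i\<in>P. v i) \<noteq> 0"
  obtains \<sigma> d where "\<sigma> \<in> M" "\<forall>k. 0 \<le> d k" "\<forall>k. k \<notin> \<sigma> \<longrightarrow> d k = 0" "\<exists>k<Nr. d k \<noteq> 0"
    "relation (\<lambda>k. coll_rel P k - d k)" "\<exists>k\<in>P. k \<notin> \<sigma>"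
proof -
  have PN: "P \<subseteq> {..<Nr}" using P unfolding primitive_collection_def by blast
  have "lattice_pt (\<Sum>i\<in>P. v i)"
    using PN lattice_pt_rays by (intro lattice_pt_sum) auto
  then obtain \<sigma> d where \<sigma>: "\<sigma> \<in> M" and d: "\<forall>k. 0 \<le> d k" "\<forall>k. k \<notin> \<sigma> \<longrightarrow> d k = 0"
    and sum_P: "(\<Sum>i\<in>P. v i) = (\<Sum>k<Nr. of_int (d k) *\<^sub>R v k)"
    by (rule lattice_pt_decomposition)
  have "relation (\<lambda>k. coll_rel P k - d k)"
    unfolding relation_def using sum_coll_rel[OF PN] sum_P
    by (simp add: scaleR_diff_left sum_subtractf)
  moreover have "\<exists>k<Nr. d k \<noteq> 0"
  proof (rule ccontr)
    assume "\<not> (\<exists>k<Nr. d k \<noteq> 0)"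
    then have "(\<Sum>k<Nr. of_int (d k) *\<^sub>R v k) = 0" by simp
    with noncentred sum_P show False by simp
  qed
  moreover have "\<not> is_face P"
    using P generates_cone_iff_face[OF PN] unfolding primitive_collection_def by simp
  then have "\<exists>k\<in>P. k \<notin> \<sigma>"
    using \<sigma> unfolding is_face_def by blast
  ultimately show thesis using that \<sigma> d by blast
qed

text \<open>The second alternative is the relation of the previous lemma; being nonnegative off a
  maximal cone, it has positive degree for every ample class.\<close>

lemma effective_relation_reduction:
  assumes eff: "effective c" and c: "relation c" and nonzero: "\<exists>k<Nr. c k \<noteq> 0"
  shows "(\<exists>P. centred_primitive_collection Nr v M P \<and> effective (\<lambda>k. c k - coll_rel P k))
    \<or> (\<exists>\<sigma>\<in>M. \<exists>E. relation E \<and> (\<forall>k<Nr. k \<notin> \<sigma> \<longrightarrow> 0 \<le> E k) \<and> (\<exists>k<Nr. E k \<noteq> 0)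
         \<and> effective (\<lambda>k. c k - E k) \<and> (\<exists>k<Nr. c k - E k \<noteq> 0))"
proof -
  obtain P where P: "primitive_collection Nr v M P" and supp: "\<forall>k\<in>P. c k \<noteq> 0"
    using primitive_collection_in_support[OF c nonzero] .
  have PN: "P \<subseteq> {..<Nr}" using P unfolding primitive_collection_def by blast
  have eff_P: "effective (\<lambda>k. c k - coll_rel P k)"
    using eff supp PN unfolding effective_def coll_rel_def by force
  show ?thesis
  proof (cases "(\<Sum>i\<in>P. v i) = 0")
    case True
    with P eff_P show ?thesis unfolding centred_primitive_collection_def by blast
  next
    case False
    then obtain \<sigma> d where \<sigma>: "\<sigma> \<in> M" and d: "\<forall>k. 0 \<le> d k" "\<forall>k. k \<notin> \<sigma> \<longrightarrow> d k = 0"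
      "\<exists>k<Nr. d k \<noteq> 0" and E: "relation (\<lambda>k. coll_rel P k - d k)" and P\<sigma>: "\<exists>k\<in>P. k \<notin> \<sigma>"
      using noncentred_primitive_collection_relation[OF P] by blast
    have "\<exists>k<Nr. coll_rel P k - d k \<noteq> 0"
      using P\<sigma> PN d(2) by (force simp: coll_rel_def)
    moreover have "effective (\<lambda>k. c k - (coll_rel P k - d k))"
      using eff_P d(1) unfolding effective_def by (simp add: diff_diff_eq2 add_increasing2)
    moreover have "\<exists>k<Nr. c k - (coll_rel P k - d k) \<noteq> 0"
    proof -
      obtain k where k: "k < Nr" "d k \<noteq> 0" using d(3) by blast
      with d(1) have "0 < d k" by (simp add: order_less_le)
      moreover have "0 \<le> c k - coll_rel P k" using eff_P k(1) unfolding effective_def by simp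
      ultimately show ?thesis using k(1) by (intro exI[of _ k]) simp
    qed
    ultimately show ?thesis
      using \<sigma> E d(2)
      by (intro disjI2 bexI[OF _ \<sigma>] exI[of _ "\<lambda>k. coll_rel P k - d k"]) (auto simp: coll_rel_def)
  qed
qed

text \<open>R is the relation \<open>\<rho>\<^sub>i + \<Sum> d\<^sub>k \<rho>\<^sub>k = 0\<close> obtained by writing \<open>-\<rho>\<^sub>i\<close> in a maximal cone \<open>\<tau>\<close>.\<close>

lemma ray_relation_through_max_cone:
  assumes eff: "effective c" and i: "i < Nr"
  obtains \<tau> R where "\<tau> \<in> M" "relation R" "effective R" "1 \<le> R i"
    "\<forall>k<Nr. k \<notin> \<tau> \<longrightarrow> 0 \<le> c k - c i * R k"
proof -
  have "lattice_pt (- v i)"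
    using i lattice_pt_rays lattice_pt_uminus by blast
  then obtain \<tau> d where \<tau>: "\<tau> \<in> M" and d: "\<forall>k. 0 \<le> d k" "\<forall>k. k \<notin> \<tau> \<longrightarrow> d k = 0"
    and vi: "- v i = (\<Sum>k<Nr. of_int (d k) *\<^sub>R v k)"
    by (rule lattice_pt_decomposition)
  define R where "R k = coll_rel {i} k + d k" for k
  have "relation R"
    unfolding relation_def R_def using sum_coll_rel[of "{i}"] i vi[symmetric]
    by (simp add: scaleR_add_left sum.distrib)
  moreover have "effective R" "1 \<le> R i"
    using d(1) unfolding effective_def R_def coll_rel_def by auto
  moreover have "\<forall>k<Nr. k \<notin> \<tau> \<longrightarrow> 0 \<le> c k - c i * R k"
  proof (intro allI impI)
    fix k assume "k < Nr" "k \<notin> \<tau>"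
    with eff d(2) show "0 \<le> c k - c i * R k"
      by (cases "k = i") (auto simp: effective_def R_def coll_rel_def)
  qed
  ultimately show thesis using that[OF \<tau>] by blast
qed

section \<open>Lower bounds by the minimal degree of centred primitive relations\<close>

context
  fixes a :: "nat \<Rightarrow> int" and \<beta> :: real
  assumes gg: "globally_generated Nr v M a"
    and beta_le: "\<forall>I. centred_primitive_collection Nr v M I \<longrightarrow> \<beta> \<le> of_int (deg a (coll_rel I))"
begin

text \<open>The induction is on the degree for an auxiliary ample class, which drops at each
  reduction step.\<close>

lemma beta_le_deg_effective:
  assumes "effective c" "relation c" "\<exists>k<Nr. c k \<noteq> 0"
  shows "\<beta> \<le> of_int (deg a c)"
proof -
  obtain a' where a': "ample Nr v M a'" using ample_exists by blast
  show ?thesis using assms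
  proof (induction "nat (deg a' c)" arbitrary: c rule: less_induct)
    case less
    note c = less.prems(2)
    from effective_relation_reduction[OF less.prems] show ?case
    proof
      assume "\<exists>P. centred_primitive_collection Nr v M P \<and> effective (\<lambda>k. c k - coll_rel P k)"
      then obtain P where P: "centred_primitive_collection Nr v M P"
        and eff_P: "effective (\<lambda>k. c k - coll_rel P k)" by blast
      have "0 \<le> deg a (\<lambda>k. c k - coll_rel P k)"
        using effective_deg_nonneg[OF gg eff_P] relation_diff[OF c relation_centred_coll_rel[OF P]] .
      then have "of_int (deg a (coll_rel P)) \<le> (of_int (deg a c) :: real)"
        by (simp add: deg_diff)
      moreover have "\<beta> \<le> of_int (deg a (coll_rel P))" using beta_le P by blast
      ultimately show ?case by linarith
    next
      assume "\<exists>\<sigma>\<in>M. \<exists>E. relation E \<and> (\<forall>k<Nr. k \<notin> \<sigma> \<longrightarrow> 0 \<le> E k) \<and> (\<exists>k<Nr. E k \<noteq> 0)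
         \<and> effective (\<lambda>k. c k - E k) \<and> (\<exists>k<Nr. c k - E k \<noteq> 0)"
      then obtain \<sigma> E where \<sigma>: "\<sigma> \<in> M" and E: "relation E" "\<forall>k<Nr. k \<notin> \<sigma> \<longrightarrow> 0 \<le> E k"
        "\<exists>k<Nr. E k \<noteq> 0" and eff_E: "effective (\<lambda>k. c k - E k)"
        and nonzero_E: "\<exists>k<Nr. c k - E k \<noteq> 0" by blast
      have c_E: "relation (\<lambda>k. c k - E k)" using relation_diff[OF c E(1)] .
      have "0 < deg a' E" using deg_pos_off_max_cone[OF a' \<sigma> E] .
      moreover have "0 \<le> deg a' (\<lambda>k. c k - E k)"
        using effective_deg_nonneg[OF ample_imp_globally_generated[OF a'] eff_E c_E] .
      ultimately have "nat (deg a' (\<lambda>k. c k - E k)) < nat (deg a' c)"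
        by (simp add: deg_diff)
      then have "\<beta> \<le> of_int (deg a (\<lambda>k. c k - E k))"
        using less.hyps eff_E c_E nonzero_E by blast
      moreover have "0 \<le> deg a E" using deg_nonneg_off_max_cone[OF gg \<sigma> E(1,2)] .
      ultimately show ?case by (simp add: deg_diff)
    qed
  qed
qed

lemma deg_le_beta_imp_centred_primitive:
  assumes am: "ample Nr v M a" and eff: "effective c" and c: "relation c"
    and nonzero: "\<exists>k<Nr. c k \<noteq> 0" and le: "of_int (deg a c) \<le> \<beta>"
  obtains I where "centred_primitive_collection Nr v M I" "of_int (deg a (coll_rel I)) = \<beta>"
    "\<forall>k<Nr. c k = coll_rel I k"
proof -
  from effective_relation_reduction[OF eff c nonzero] show thesis
  proof
    assume "\<exists>P. centred_primitive_collection Nr v M P \<and> effective (\<lambda>k. c k - coll_rel P k)"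
    then obtain P where P: "centred_primitive_collection Nr v M P"
      and eff_P: "effective (\<lambda>k. c k - coll_rel P k)" by blast
    have beta_P: "\<beta> \<le> of_int (deg a (coll_rel P))" using beta_le P by blast
    have c_P: "relation (\<lambda>k. c k - coll_rel P k)"
      using relation_diff[OF c relation_centred_coll_rel[OF P]] .
    have "\<not> (\<exists>k<Nr. c k - coll_rel P k \<noteq> 0)"
    proof
      assume "\<exists>k<Nr. c k - coll_rel P k \<noteq> 0"
      then have "0 < deg a (\<lambda>k. c k - coll_rel P k)"
        using effective_deg_pos[OF am eff_P c_P] by blast
      then have "of_int (deg a (coll_rel P)) < (of_int (deg a c) :: real)"
        by (simp add: deg_diff)
      with beta_P le show False by linarith
    qed
    then have eq: "\<forall>k<Nr. c k = coll_rel P k" by simp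
    then have "deg a c = deg a (coll_rel P)" by (intro deg_cong) simp
    with beta_P le have "of_int (deg a (coll_rel P)) = \<beta>" by simp
    from P this eq show thesis by (rule that)
  next
    assume "\<exists>\<sigma>\<in>M. \<exists>E. relation E \<and> (\<forall>k<Nr. k \<notin> \<sigma> \<longrightarrow> 0 \<le> E k) \<and> (\<exists>k<Nr. E k \<noteq> 0)
       \<and> effective (\<lambda>k. c k - E k) \<and> (\<exists>k<Nr. c k - E k \<noteq> 0)"
    then obtain \<sigma> E where \<sigma>: "\<sigma> \<in> M" and E: "relation E" "\<forall>k<Nr. k \<notin> \<sigma> \<longrightarrow> 0 \<le> E k"
      "\<exists>k<Nr. E k \<noteq> 0" and eff_E: "effective (\<lambda>k. c k - E k)"
      and nonzero_E: "\<exists>k<Nr. c k - E k \<noteq> 0" by blast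
    have "\<beta> \<le> of_int (deg a (\<lambda>k. c k - E k))"
      using beta_le_deg_effective[OF eff_E relation_diff[OF c E(1)] nonzero_E] .
    moreover have "0 < deg a E" using deg_pos_off_max_cone[OF am \<sigma> E] .
    ultimately have "\<beta> < of_int (deg a c)"
      by (simp add: deg_diff)
    with le show thesis by simp
  qed
qed

lemma coeff_mult_beta_le_deg:
  assumes eff: "effective c" and c: "relation c" and i: "i < Nr"
  shows "of_int (c i) * \<beta> \<le> of_int (deg a c)"
proof -
  obtain \<tau> R where \<tau>: "\<tau> \<in> M" and R: "relation R" "effective R" "1 \<le> R i"
    and E: "\<forall>k<Nr. k \<notin> \<tau> \<longrightarrow> 0 \<le> c k - c i * R k"
    using ray_relation_through_max_cone[OF eff i] .
  have "\<beta> \<le> of_int (deg a R)"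
    using beta_le_deg_effective[OF R(2,1)] R(3) i by (metis not_one_le_zero)
  moreover have "0 \<le> deg a (\<lambda>k. c k - c i * R k)"
    using deg_nonneg_off_max_cone[OF gg \<tau> relation_diff[OF c relation_scale[OF R(1)]] E] .
  moreover have "0 \<le> c i" using eff i unfolding effective_def by simp
  ultimately have "of_int (c i) * \<beta> \<le> of_int (c i * deg a R + deg a (\<lambda>k. c k - c i * R k))"
    by (simp add: mult_left_mono add_increasing2)
  then show ?thesis by (simp add: deg_diff deg_scale)
qed

text \<open>Equality with \<open>c\<^sub>i > 0\<close> forces \<open>deg R = \<beta>\<close>, so R is the relation of a centred
  primitive collection I of degree \<open>\<beta>\<close> with \<open>i \<in> I\<close>, and \<open>c - c\<^sub>i R\<close>, of degree 0,
  vanishes off I.\<close>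

lemma coeff_mult_beta_less_deg:
  assumes am: "ample Nr v M a" and eff: "effective c" and c: "relation c"
    and nonzero: "\<exists>k<Nr. c k \<noteq> 0" and i: "i < Nr" and k0: "k0 < Nr" "k0 = i \<or> 0 < c k0"
    and avoids: "\<forall>I. centred_primitive_collection Nr v M I \<and> of_int (deg a (coll_rel I)) = \<beta>
      \<longrightarrow> k0 \<notin> I"
  shows "of_int (c i) * \<beta> < of_int (deg a c)"
proof (cases "c i = 0")
  case True
  then show ?thesis using effective_deg_pos[OF am eff c nonzero] by simp
next
  case False
  with eff i have ci: "0 < c i" unfolding effective_def by (simp add: order_less_le)
  obtain \<tau> R where \<tau>: "\<tau> \<in> M" and R: "relation R" "effective R" "1 \<le> R i"
    and E_nonneg: "\<forall>k<Nr. k \<notin> \<tau> \<longrightarrow> 0 \<le> c k - c i * R k"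
    using ray_relation_through_max_cone[OF eff i] .
  define E where "E = (\<lambda>k. c k - c i * R k)"
  have E: "relation E"
    unfolding E_def by (intro relation_diff relation_scale c R(1))
  have deg_c: "of_int (deg a c) = of_int (c i) * of_int (deg a R) + (of_int (deg a E) :: real)"
    by (simp add: E_def deg_diff deg_scale)
  have R_nonzero: "\<exists>k<Nr. R k \<noteq> 0" using R(3) i by (metis not_one_le_zero)
  have beta_R: "\<beta> \<le> of_int (deg a R)"
    using beta_le_deg_effective[OF R(2,1) R_nonzero] .
  have "0 \<le> deg a E"
    using deg_nonneg_off_max_cone[OF gg \<tau> E] E_nonneg unfolding E_def by blast
  show ?thesis
  proof (cases "\<beta> < of_int (deg a R)")
    case True
    with ci have "of_int (c i) * \<beta> < of_int (c i) * of_int (deg a R)" by simp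
    with deg_c \<open>0 \<le> deg a E\<close> show ?thesis by linarith
  next
    case False
    with beta_R have "of_int (deg a R) \<le> \<beta>" by simp
    then obtain I where I: "centred_primitive_collection Nr v M I"
      "of_int (deg a (coll_rel I)) = \<beta>" and R_I: "\<forall>k<Nr. R k = coll_rel I k"
      using deg_le_beta_imp_centred_primitive[OF am R(2,1) R_nonzero] by blast
    have "i \<in> I" using R_I R(3) i unfolding coll_rel_def by (metis not_one_le_zero)
    moreover have "k0 \<notin> I" using avoids I by blast
    ultimately have "0 < c k0" "R k0 = 0" using k0 R_I unfolding coll_rel_def by auto
    then have "0 < deg a E"
      using deg_pos_off_max_cone[OF am \<tau> E] E_nonneg k0(1) unfolding E_def by force
    moreover have "of_int (deg a R) = \<beta>"
      using I(2) R_I by (metis deg_cong)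
    ultimately show ?thesis using deg_c by simp
  qed
qed

end

end

theorem proposition6p6:
  fixes v :: "nat \<Rightarrow> real^'n" and M :: "nat set set" and r :: nat
    and b :: "nat \<Rightarrow> nat \<Rightarrow> nat" and a :: "nat \<Rightarrow> int" and \<beta> :: real
  assumes fan: "smooth_projective_fan (CARD('n) + r) v M"
    and sigma0: "{..<CARD('n)} \<in> M"
    and rel: "\<forall>j<r. v (CARD('n) + j) + (\<Sum>i<CARD('n). real (b i j) *\<^sub>R v i) = 0"
    and gg: "globally_generated (CARD('n) + r) v M a"
    and beta_attained: "\<exists>I. centred_primitive_collection (CARD('n) + r) v M I \<and>
                             Ldeg (CARD('n) + r) v M a (coll_rel I) = \<beta>"
    and beta_min: "\<forall>I. centred_primitive_collection (CARD('n) + r) v M I \<longrightarrow>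
                             \<beta> \<le> Ldeg (CARD('n) + r) v M a (coll_rel I)"
  shows "(\<forall>i0<CARD('n). \<forall>j0<r.
            Ldeg (CARD('n) + r) v M a (pos_rel (CARD('n)) b j0)
              = of_int (a (CARD('n) + j0)) + (\<Sum>i<CARD('n). of_int (a i) * real (b i j0))
          \<and> Ldeg (CARD('n) + r) v M a (pos_rel (CARD('n)) b j0) \<ge> real (b i0 j0) * \<beta>)
       \<and> (ample (CARD('n) + r) v M a \<longrightarrow>
           (\<forall>i0<CARD('n).
              (\<forall>I. centred_primitive_collection (CARD('n) + r) v M I \<and>
                   Ldeg (CARD('n) + r) v M a (coll_rel I) = \<beta> \<longrightarrow> i0 \<notin> I) \<longrightarrow>
              (\<forall>j0<r. Ldeg (CARD('n) + r) v M a (pos_rel (CARD('n)) b j0) > real (b i0 j0) * \<beta>)))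
       \<and> (ample (CARD('n) + r) v M a \<longrightarrow>
           (\<forall>j0<r.
              (\<forall>I. centred_primitive_collection (CARD('n) + r) v M I \<and>
                   Ldeg (CARD('n) + r) v M a (coll_rel I) = \<beta> \<longrightarrow> CARD('n) + j0 \<notin> I) \<longrightarrow>
              (\<forall>i0<CARD('n). Ldeg (CARD('n) + r) v M a (pos_rel (CARD('n)) b j0) > real (b i0 j0) * \<beta>)))"
proof -
  let ?N = "CARD('n)" and ?P = "pos_rel CARD('n) b"
  interpret smooth_fan "?N + r" v M by (rule smooth_fan.intro[OF fan])
  let ?avoids = "\<lambda>k. \<forall>I. centred_primitive_collection (?N + r) v M I \<and>
    of_int (deg a (coll_rel I)) = \<beta> \<longrightarrow> k \<notin> I"
  have beta_le: "\<forall>I. centred_primitive_collection (?N + r) v M I \<longrightarrow> \<beta> \<le> of_int (deg a (coll_rel I))"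
    using beta_min by (simp add: Ldeg_eq_deg)
  have P: "relation (?P j)" "\<exists>k<?N + r. ?P j k \<noteq> 0" if "j < r" for j
    using that rel relation_pos_rel[of ?N j b] by (auto simp: pos_rel_def intro!: exI[of _ "?N + j"])
  note le = coeff_mult_beta_le_deg[OF gg beta_le effective_pos_rel P(1)]
  note less = coeff_mult_beta_less_deg[OF gg beta_le _ effective_pos_rel P]
  have bound: "real (b i j) * \<beta> \<le> of_int (deg a (?P j))" if "i < ?N" "j < r" for i j
    using le[of j i] that by (simp add: pos_rel_def)
  have strict_ray: "real (b i j) * \<beta> < of_int (deg a (?P j))"
    if "ample (?N + r) v M a" "i < ?N" "j < r" "?avoids i" for i j
    using less[of j i i] that by (simp add: pos_rel_def)
  have strict_pos: "real (b i j) * \<beta> < of_int (deg a (?P j))"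
    if "ample (?N + r) v M a" "i < ?N" "j < r" "?avoids (?N + j)" for i j
    using less[of j i "?N + j"] that by (simp add: pos_rel_def)
  show ?thesis
    using bound strict_ray strict_pos by (auto simp: Ldeg_eq_deg deg_pos_rel)
qed

end
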